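(* The symmetric reciprocal cataclysmic quarrel rule is supremely non-monotonic: for every integer $k\ge0$ there exist $n\ge2$, distinct players $i,j\in[n]$ and a monotonic game $\mathcal W$ on $[n]$ such that the game $\hat{\mathcal W}$ obtained by imposing a symmetric reciprocal cataclysmic quarrel between $i$ and $j$ is not $k$-monotonic.
   Context: Players are $[n]=\{1,\dots,n\}$. A binary voting game on $[n]$ is identified with its collection $\mathcal W\subseteq 2^{[n]}$ of winning sets ($S\in\mathcal W$ means the division in which exactly the members of $S$ vote YES has outcome YES). It is monotonic if $T\subseteq S$ and $T\in\mathcal W$ imply $S\in\mathcal W$. For an integer $k\ge0$, a game $\mathcal W$ is $k$-monotonic if for every $S\subseteq[n]$ with $S\notin\mathcal W$ and every proper subset $T\subsetneq S$ there exists $K$ with $|K|\le k$ such that $T\setminus K\notin\mathcal W$. Symmetric reciprocal cataclysmic quarrel between $i$ and $j$: for every $S\subseteq[n]\setminus\{i,j\}$, $S\cup\{i,j\}\in\hat{\mathcal W}\iff \emptyset\in\mathcal W$; $S\in\hat{\mathcal W}\iff [n]\in\mathcal W$; $S\cup\{i\}\in\hat{\mathcal W}\iff S\cup\{i\}\in\mathcal W$; $S\cup\{j\}\in\hat{\mathcal W}\iff S\cup\{j\}\in\mathcal W$. *)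

theory Defs
  imports Main
begin

definition is_game :: "nat \<Rightarrow> nat set set \<Rightarrow> bool" where
  "is_game n W \<longleftrightarrow> W \<subseteq> Pow {1..n}"

definition monotonic :: "nat \<Rightarrow> nat set set \<Rightarrow> bool" where
  "monotonic n W \<longleftrightarrow> (\<forall>S T. S \<subseteq> {1..n} \<longrightarrow> T \<subseteq> S \<longrightarrow> T \<in> W \<longrightarrow> S \<in> W)"

definition k_monotonic :: "nat \<Rightarrow> nat \<Rightarrow> nat set set \<Rightarrow> bool" where
  "k_monotonic n k W \<longleftrightarrow>
     (\<forall>S. S \<subseteq> {1..n} \<longrightarrow> S \<notin> W \<longrightarrow>
        (\<forall>T. T \<subset> S \<longrightarrow> (\<exists>K. K \<subseteq> {1..n} \<and> card K \<le> k \<and> T - K \<notin> W)))"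

definition sym_rec_cat_quarrel :: "nat \<Rightarrow> nat \<Rightarrow> nat \<Rightarrow> nat set set \<Rightarrow> nat set set" where
  "sym_rec_cat_quarrel n i j W =
     {S. S \<subseteq> {1..n} \<and>
        (if i \<in> S \<and> j \<in> S then {} \<in> W
         else if i \<notin> S \<and> j \<notin> S then {1..n} \<in> W
         else S \<in> W)}"

end

theory Submission
  imports Defs
begin

text \<open>The quarrel makes the empty division winning as soon as the grand coalition wins, and makes
  the division in which both quarrelling players vote YES losing as soon as the empty division
  loses. In the dictator game of player i, the losing set {i, j} then has the proper subset {i}
  all of whose subsets win, so no bounded number of removals from {i} can produce a losing set.\<close>

lemma not_k_monotonic_if_subsets_win:
  assumes "S \<subseteq> {1..n}" "S \<notin> W" "T \<subset> S" "\<And>U. U \<subseteq> T \<Longrightarrow> U \<in> W"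
  shows "\<not> k_monotonic n k W"
  using assms unfolding k_monotonic_def by (meson Diff_subset)

lemma sym_rec_cat_quarrel_both:
  "{i, j} \<subseteq> {1..n} \<Longrightarrow> {i, j} \<in> sym_rec_cat_quarrel n i j W \<longleftrightarrow> {} \<in> W"
  unfolding sym_rec_cat_quarrel_def by simp

lemma sym_rec_cat_quarrel_empty:
  "{} \<in> sym_rec_cat_quarrel n i j W \<longleftrightarrow> {1..n} \<in> W"
  unfolding sym_rec_cat_quarrel_def by simp

lemma sym_rec_cat_quarrel_single:
  "i \<in> {1..n} \<Longrightarrow> i \<noteq> j \<Longrightarrow> {i} \<in> sym_rec_cat_quarrel n i j W \<longleftrightarrow> {i} \<in> W"
  unfolding sym_rec_cat_quarrel_def by simp

lemma sym_rec_cat_quarrel_not_k_monotonic: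
  assumes ij: "i \<in> {1..n}" "j \<in> {1..n}" "i \<noteq> j"
    and mono: "monotonic n W" and empty_loses: "{} \<notin> W" and single_wins: "{i} \<in> W"
  shows "\<not> k_monotonic n k (sym_rec_cat_quarrel n i j W)"
proof (rule not_k_monotonic_if_subsets_win)
  show "{i, j} \<subseteq> {1..n}" "{i} \<subset> {i, j}" using ij by auto
  show "{i, j} \<notin> sym_rec_cat_quarrel n i j W"
    using ij empty_loses sym_rec_cat_quarrel_both by simp
  have "{1..n} \<in> W"
    using mono single_wins ij(1) unfolding monotonic_def by blast
  then show "U \<in> sym_rec_cat_quarrel n i j W" if "U \<subseteq> {i}" for U
    using that ij single_wins sym_rec_cat_quarrel_empty sym_rec_cat_quarrel_single
    by (cases "U = {}") (auto simp: subset_singleton_iff)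
qed

theorem theorem10:
  shows "\<forall>k::nat. \<exists>n\<ge>2. \<exists>i j. i \<in> {1..n} \<and> j \<in> {1..n} \<and> i \<noteq> j \<and>
           (\<exists>W. is_game n W \<and> monotonic n W \<and>
                \<not> k_monotonic n k (sym_rec_cat_quarrel n i j W))"
proof
  fix k :: nat
  define W :: "nat set set" where "W = {S. S \<subseteq> {1..2} \<and> 1 \<in> S}"
  have "is_game 2 W" "monotonic 2 W" "{} \<notin> W" "{1} \<in> W"
    unfolding is_game_def monotonic_def W_def by auto
  then have "\<not> k_monotonic 2 k (sym_rec_cat_quarrel 2 1 2 W)"
    by (intro sym_rec_cat_quarrel_not_k_monotonic) auto
  with \<open>is_game 2 W\<close> \<open>monotonic 2 W\<close>
  show "\<exists>n\<ge>2. \<exists>i j. i \<in> {1..n} \<and> j \<in> {1..n} \<and> i \<noteq> j \<and>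
           (\<exists>W. is_game n W \<and> monotonic n W \<and>
                \<not> k_monotonic n k (sym_rec_cat_quarrel n i j W))"
    by (intro exI[of _ 2] conjI exI[of _ 1] exI[of _ 2] exI[of _ W]) auto
qed

end
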